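(* Every asymptotic stochastic super-solution $w$ of the lower Isaacs equation satisfies $w\ge v^+_M$ on $[0,T]\times\mathbb{R}^d$.
   Context: Setting: $U,V$ compact metric spaces; $b,\sigma$ on $[0,T]\times\mathbb{R}^d\times U\times V$ jointly continuous, locally Lipschitz in $x$ uniformly in $(t,u,v)$, with linear growth; $g:\mathbb{R}^d\to\mathbb{R}$ bounded continuous. For each $s$ a fixed filtered probability space $(\Omega,\mathcal{F},\mathbb{P},(\mathcal{F}_t)_{s\le t\le T})$ (usual conditions) with a Brownian motion $W$; $X^{s,x;u,\gamma}$ is the strong solution of $dX_t=b(t,X_t,u_t,v_t)dt+\sigma(t,X_t,u_t,v_t)dW_t$, $X_s=x$, with $v_t=\gamma(t,X_\cdot,u_t)$. $\mathcal{U}(s)$: $(\mathcal{F}_t)$-predictable $U$-valued processes. With $\mathcal{B}_t=\sigma(y(q),s\le q\le t)$ on $C[s,T]$, $\mathcal{C}(s)$ is the set of elementary counter-strategies $\gamma(t,y,u)=\sum_k1_{\{\tau_{k-1}(y)<t\le\tau_k(y)\}}\eta_k(y,u)\in V$ ($\tau_k$ stopping rules of $(\mathcal{B}_t)$, $\eta_k$ $\mathcal{B}_{\tau_{k-1}}\otimes\mathcal{B}(U)$-measurable). $\mathcal{C}^M(s)$: simple Markov counter-strategies, i.e. for some grid $s=t_0<\dots<t_n=T$, $\gamma(t,y,u)=\sum_k1_{\{t_{k-1}<t\le t_k\}}\eta_k(y(t_{k-1}),u)$ with $\eta_k:\mathbb{R}^d\times U\to V$ measurable. $v^+_M(s,x)=\inf_{\gamma\in\mathcal{C}^M(s)}\sup_{u\in\mathcal{U}(s)}\mathbb{E}[g(X^{s,x;u,\gamma}_T)]$.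 Asymptotic stochastic super-solution: a bounded continuous $w$ with $w(T,\cdot)\ge g$, for which there is $\varphi:(0,\infty)\to(0,\infty)$ with $\varphi(\varepsilon)\to0$ as $\varepsilon\searrow0$ such that for every $s$ and $r\in[s,T]$ there is a measurable $\eta:\mathbb{R}^d\times U\to V$ such that for all $x$, $\gamma\in\mathcal{C}(s)$, $u\in\mathcal{U}(s)$, with $\gamma[r,\eta](t,y,u)=1_{\{s<t\le r\}}\gamma(t,y,u)+1_{\{r<t\le T\}}\eta(y(r),u)$, for all $t\in[r,T]$: $w(r,X^{s,x;u,\gamma}_r)\ge\mathbb{E}[w(t,X^{s,x;u,\gamma[r,\eta]}_t)\mid\mathcal{F}_r]-(t-r)\varphi(t-r)$ a.s. *)

theory Defs
  imports "HOL-Probability.Probability"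
begin

text \<open>Filtration on [s,T] satisfying the usual conditions (right-continuous, complete).
  The sub-sigma-algebras are given as measures (as used by real_cond_exp).\<close>
definition sg_filt_usual :: "'w measure \<Rightarrow> (real \<Rightarrow> 'w measure) \<Rightarrow> real \<Rightarrow> real \<Rightarrow> bool" where
  "sg_filt_usual M F s T \<longleftrightarrow> prob_space M \<and>
     (\<forall>t\<in>{s..T}. subalgebra M (F t)) \<and>
     (\<forall>t1 t2. s \<le> t1 \<and> t1 \<le> t2 \<and> t2 \<le> T \<longrightarrow> sets (F t1) \<subseteq> sets (F t2)) \<and>
     (\<forall>t\<in>{s..<T}. sets (F t) = (\<Inter>t'\<in>{t<..T}. sets (F t'))) \<and>
     (\<forall>N. (\<exists>A\<in>null_sets M. N \<subseteq> A) \<longrightarrow> N \<in> sets (F s))"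

definition sg_brownian :: "'w measure \<Rightarrow> (real \<Rightarrow> 'w measure) \<Rightarrow> real \<Rightarrow> real
    \<Rightarrow> (real \<Rightarrow> 'w \<Rightarrow> real ^ 'm) \<Rightarrow> bool" where
  "sg_brownian M F s T W \<longleftrightarrow>
     (\<forall>\<omega>\<in>space M. W s \<omega> = 0 \<and> continuous_on {s..T} (\<lambda>t. W t \<omega>)) \<and>
     (\<forall>t\<in>{s..T}. W t \<in> borel_measurable (F t)) \<and>
     (\<forall>t1 t2. s \<le> t1 \<and> t1 < t2 \<and> t2 \<le> T \<longrightarrow>
        prob_space.indep_sets M
          (\<lambda>i. case i of None \<Rightarrow> sets (F t1)
                | Some j \<Rightarrow> sigma_sets (space M)
                    {(\<lambda>\<omega>. W t2 \<omega> $ j - W t1 \<omega> $ j) -` A \<inter> space M | A. A \<in> sets (borel :: real measure)})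
          UNIV \<and>
        (\<forall>j. distributed M lborel (\<lambda>\<omega>. W t2 \<omega> $ j - W t1 \<omega> $ j)
               (\<lambda>z. ennreal (normal_density 0 (sqrt (t2 - t1)) z))))"

definition sg_conv_prob :: "'w measure \<Rightarrow> (nat \<Rightarrow> 'w \<Rightarrow> ennreal) \<Rightarrow> bool" where
  "sg_conv_prob M G \<longleftrightarrow>
     (\<forall>n. \<forall>e>0. {\<omega>\<in>space M. ennreal e < G n \<omega>} \<in> sets M) \<and>
     (\<forall>e>0. (\<lambda>n. measure M {\<omega>\<in>space M. ennreal e < G n \<omega>}) \<longlonglongrightarrow> 0)"

definition sg_simple :: "'w measure \<Rightarrow> (real \<Rightarrow> 'w measure) \<Rightarrow> real \<Rightarrow> real
    \<Rightarrow> real list \<times> (nat \<Rightarrow> 'w \<Rightarrow> real) \<Rightarrow> bool" where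
  "sg_simple M F s T p \<longleftrightarrow> (let ts = fst p; \<xi> = snd p in
     ts \<noteq> [] \<and> ts ! 0 = s \<and> last ts = T \<and> sorted_wrt (<) ts \<and>
     (\<forall>i < length ts - 1. \<xi> i \<in> borel_measurable (F (ts ! i)) \<and>
        (\<exists>B. \<forall>\<omega>\<in>space M. \<bar>\<xi> i \<omega>\<bar> \<le> B)))"

definition sg_simple_val :: "real list \<times> (nat \<Rightarrow> 'w \<Rightarrow> real) \<Rightarrow> real \<Rightarrow> 'w \<Rightarrow> real" where
  "sg_simple_val p q \<omega> = (let ts = fst p; \<xi> = snd p in
     (\<Sum>i<length ts - 1. if ts ! i < q \<and> q \<le> ts ! (i+1) then \<xi> i \<omega> else 0))"

definition sg_simple_int :: "real list \<times> (nat \<Rightarrow> 'w \<Rightarrow> real) \<Rightarrow> (real \<Rightarrow> 'w \<Rightarrow> real)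
    \<Rightarrow> real \<Rightarrow> 'w \<Rightarrow> real" where
  "sg_simple_int p B t \<omega> = (let ts = fst p; \<xi> = snd p in
     (\<Sum>i<length ts - 1. \<xi> i \<omega> * (B (min t (ts ! (i+1))) \<omega> - B (min t (ts ! i)) \<omega>)))"

text \<open>I is (a version of) the Ito integral of h against the scalar Brownian motion B on [s,T]:
  a continuous adapted process which is the limit (in probability, uniformly in time) of the
  elementary integrals of any simple predictable approximation of h in the sense
  int_s^T (h_n - h)^2 dt -> 0 in probability (such an approximation must exist).\<close>
definition sg_ito :: "'w measure \<Rightarrow> (real \<Rightarrow> 'w measure) \<Rightarrow> real \<Rightarrow> real
    \<Rightarrow> (real \<Rightarrow> 'w \<Rightarrow> real) \<Rightarrow> (real \<Rightarrow> 'w \<Rightarrow> real) \<Rightarrow> (real \<Rightarrow> 'w \<Rightarrow> real) \<Rightarrow> bool" where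
  "sg_ito M F s T B h I \<longleftrightarrow>
     (\<forall>t\<in>{s..T}. I t \<in> borel_measurable (F t)) \<and>
     (\<forall>\<omega>\<in>space M. continuous_on {s..T} (\<lambda>t. I t \<omega>)) \<and>
     (let approx = (\<lambda>P. (\<forall>n. sg_simple M F s T (P n)) \<and>
            sg_conv_prob M (\<lambda>n \<omega>. \<integral>\<^sup>+ q. ennreal (indicator {s..T} q *
                   (sg_simple_val (P n) q \<omega> - h q \<omega>)\<^sup>2) \<partial>lborel)) in
      (\<exists>P. approx P) \<and>
      (\<forall>P. approx P \<longrightarrow>
         sg_conv_prob M (\<lambda>n \<omega>. SUP t\<in>{s..T}. ennreal \<bar>sg_simple_int (P n) B t \<omega> - I t \<omega>\<bar>)))"

definition sg_ito_vec :: "'w measure \<Rightarrow> (real \<Rightarrow> 'w measure) \<Rightarrow> real \<Rightarrow> real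
    \<Rightarrow> (real \<Rightarrow> 'w \<Rightarrow> real ^ 'm::finite) \<Rightarrow> (real \<Rightarrow> 'w \<Rightarrow> real ^ 'm ^ 'd::finite)
    \<Rightarrow> (real \<Rightarrow> 'w \<Rightarrow> real ^ 'd) \<Rightarrow> bool" where
  "sg_ito_vec M F s T W H I \<longleftrightarrow>
     (\<exists>J. (\<forall>i j. sg_ito M F s T (\<lambda>t \<omega>. W t \<omega> $ j) (\<lambda>t \<omega>. H t \<omega> $ i $ j) (J i j)) \<and>
          (\<forall>t\<in>{s..T}. \<forall>\<omega>\<in>space M. I t \<omega> = (\<chi> i. \<Sum>j\<in>UNIV. J i j t \<omega>)))"

definition sg_pred_sigma :: "'w measure \<Rightarrow> (real \<Rightarrow> 'w measure) \<Rightarrow> real \<Rightarrow> real \<Rightarrow> (real \<times> 'w) measure" where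
  "sg_pred_sigma M F s T = sigma ({s..T} \<times> space M)
     ({{s} \<times> A | A. A \<in> sets (F s)} \<union>
      {{a<..b} \<times> A | a b A. s \<le> a \<and> a < b \<and> b \<le> T \<and> A \<in> sets (F a)})"

definition sg_controls :: "'w measure \<Rightarrow> (real \<Rightarrow> 'w measure) \<Rightarrow> real \<Rightarrow> real
    \<Rightarrow> (real \<Rightarrow> 'w \<Rightarrow> 'u::topological_space) set" where
  "sg_controls M F s T = {u. (\<lambda>(t, \<omega>). u t \<omega>) \<in> measurable (sg_pred_sigma M F s T) borel}"

text \<open>C[s,T], represented by functions continuous on [s,T] and 0 outside.\<close>
definition sg_paths :: "real \<Rightarrow> real \<Rightarrow> (real \<Rightarrow> real ^ 'd::finite) set" where
  "sg_paths s T = {y. continuous_on {s..T} y \<and> (\<forall>q. q \<notin> {s..T} \<longrightarrow> y q = 0)}"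

definition sg_Bt :: "real \<Rightarrow> real \<Rightarrow> real \<Rightarrow> (real \<Rightarrow> real ^ 'd::finite) measure" where
  "sg_Bt s T t = sigma (sg_paths s T)
     {{y \<in> sg_paths s T. y q \<in> A} | q A. q \<in> {s..t} \<and> A \<in> sets (borel :: (real ^ 'd) measure)}"

definition sg_stopping_rule :: "real \<Rightarrow> real \<Rightarrow> ((real \<Rightarrow> real ^ 'd::finite) \<Rightarrow> real) \<Rightarrow> bool" where
  "sg_stopping_rule s T \<tau> \<longleftrightarrow> (\<forall>y\<in>sg_paths s T. \<tau> y \<in> {s..T}) \<and>
     (\<forall>t\<in>{s..T}. {y \<in> sg_paths s T. \<tau> y \<le> t} \<in> sets (sg_Bt s T t))"

definition sg_Bstop :: "real \<Rightarrow> real \<Rightarrow> ((real \<Rightarrow> real ^ 'd::finite) \<Rightarrow> real) \<Rightarrow> (real \<Rightarrow> real ^ 'd) measure" where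
  "sg_Bstop s T \<tau> = sigma (sg_paths s T)
     {A \<in> sets (sg_Bt s T T). \<forall>t\<in>{s..T}. A \<inter> {y \<in> sg_paths s T. \<tau> y \<le> t} \<in> sets (sg_Bt s T t)}"

definition sg_elem_cs :: "real \<Rightarrow> real \<Rightarrow> (real \<Rightarrow> (real \<Rightarrow> real ^ 'd::finite) \<Rightarrow> 'u::topological_space \<Rightarrow> 'v::topological_space) \<Rightarrow> bool" where
  "sg_elem_cs s T \<gamma> \<longleftrightarrow> (\<exists>(n::nat) \<tau> \<eta>.
     (\<forall>k\<le>n. sg_stopping_rule s T (\<tau> k)) \<and>
     (\<forall>y\<in>sg_paths s T. \<tau> 0 y = s \<and> \<tau> n y = T \<and> (\<forall>k<n. \<tau> k y \<le> \<tau> (Suc k) y)) \<and>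
     (\<forall>k\<in>{1..n}. (\<lambda>(y, u). \<eta> k y u) \<in> measurable (sg_Bstop s T (\<tau> (k - 1)) \<Otimes>\<^sub>M borel) borel) \<and>
     (\<forall>k\<in>{1..n}. \<forall>y\<in>sg_paths s T. \<forall>t u. \<tau> (k - 1) y < t \<and> t \<le> \<tau> k y \<longrightarrow> \<gamma> t y u = \<eta> k y u))"

definition sg_markov_cs :: "real \<Rightarrow> real \<Rightarrow> (real \<Rightarrow> (real \<Rightarrow> real ^ 'd::finite) \<Rightarrow> 'u::topological_space \<Rightarrow> 'v::topological_space) \<Rightarrow> bool" where
  "sg_markov_cs s T \<gamma> \<longleftrightarrow> (\<exists>ts \<eta>.
     ts \<noteq> [] \<and> ts ! 0 = s \<and> last ts = T \<and> sorted_wrt (<) ts \<and>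
     (\<forall>k. (\<lambda>(x, u). \<eta> k x u) \<in> measurable (borel \<Otimes>\<^sub>M borel) borel) \<and>
     (\<forall>k < length ts - 1. \<forall>t y u. ts ! k < t \<and> t \<le> ts ! (k+1) \<longrightarrow> \<gamma> t y u = \<eta> k (y (ts ! k)) u))"

definition sg_splice :: "real \<Rightarrow> (real ^ 'd \<Rightarrow> 'u \<Rightarrow> 'v) \<Rightarrow> (real \<Rightarrow> (real \<Rightarrow> real ^ 'd) \<Rightarrow> 'u \<Rightarrow> 'v)
    \<Rightarrow> (real \<Rightarrow> (real \<Rightarrow> real ^ 'd) \<Rightarrow> 'u \<Rightarrow> 'v)" where
  "sg_splice r \<eta> \<gamma> = (\<lambda>t y u. if t \<le> r then \<gamma> t y u else \<eta> (y r) u)"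

definition sg_path :: "real \<Rightarrow> real \<Rightarrow> (real \<Rightarrow> 'w \<Rightarrow> real ^ 'd) \<Rightarrow> 'w \<Rightarrow> real \<Rightarrow> real ^ 'd" where
  "sg_path s T X \<omega> = (\<lambda>q. if q \<in> {s..T} then X q \<omega> else 0)"

definition sg_strong_sol :: "'w measure \<Rightarrow> (real \<Rightarrow> 'w measure) \<Rightarrow> (real \<Rightarrow> 'w \<Rightarrow> real ^ 'm::finite)
    \<Rightarrow> (real \<Rightarrow> real ^ 'd::finite \<Rightarrow> 'u \<Rightarrow> 'v \<Rightarrow> real ^ 'd)
    \<Rightarrow> (real \<Rightarrow> real ^ 'd \<Rightarrow> 'u \<Rightarrow> 'v \<Rightarrow> real ^ 'm ^ 'd)
    \<Rightarrow> real \<Rightarrow> real \<Rightarrow> real ^ 'd \<Rightarrow> (real \<Rightarrow> 'w \<Rightarrow> 'u) \<Rightarrow> (real \<Rightarrow> (real \<Rightarrow> real ^ 'd) \<Rightarrow> 'u \<Rightarrow> 'v)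
    \<Rightarrow> (real \<Rightarrow> 'w \<Rightarrow> real ^ 'd) \<Rightarrow> bool" where
  "sg_strong_sol M F W b \<sigma> s T x u \<gamma> X \<longleftrightarrow>
     (\<forall>t\<in>{s..T}. X t \<in> borel_measurable (F t)) \<and>
     (\<forall>\<omega>\<in>space M. X s \<omega> = x \<and> continuous_on {s..T} (\<lambda>t. X t \<omega>)) \<and>
     (let v = (\<lambda>q \<omega>. \<gamma> q (sg_path s T X \<omega>) (u q \<omega>)) in
       (AE \<omega> in M. set_integrable lborel {s..T} (\<lambda>q. b q (X q \<omega>) (u q \<omega>) (v q \<omega>))) \<and>
       (AE \<omega> in M. (\<integral>\<^sup>+ q. ennreal (indicator {s..T} q * (norm (\<sigma> q (X q \<omega>) (u q \<omega>) (v q \<omega>)))\<^sup>2) \<partial>lborel) < \<infinity>) \<and>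
       (\<exists>I. sg_ito_vec M F s T W (\<lambda>q \<omega>. \<sigma> q (X q \<omega>) (u q \<omega>) (v q \<omega>)) I \<and>
          (\<forall>t\<in>{s..T}. AE \<omega> in M.
             X t \<omega> = x + set_lebesgue_integral lborel {s..t} (\<lambda>q. b q (X q \<omega>) (u q \<omega>) (v q \<omega>)) + I t \<omega>)))"

text \<open>Here Xsol s x u gamma is the state process X^{s,x;u,gamma} on the space (M s, F s, W s).\<close>
definition sg_vM :: "real \<Rightarrow> (real ^ 'd::finite \<Rightarrow> real) \<Rightarrow> (real \<Rightarrow> 'w measure) \<Rightarrow> (real \<Rightarrow> real \<Rightarrow> 'w measure)
    \<Rightarrow> (real \<Rightarrow> real ^ 'd \<Rightarrow> (real \<Rightarrow> 'w \<Rightarrow> 'u::topological_space) \<Rightarrow> (real \<Rightarrow> (real \<Rightarrow> real ^ 'd) \<Rightarrow> 'u \<Rightarrow> 'v::topological_space)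
        \<Rightarrow> real \<Rightarrow> 'w \<Rightarrow> real ^ 'd)
    \<Rightarrow> real \<Rightarrow> real ^ 'd \<Rightarrow> real" where
  "sg_vM T g M F Xsol s x =
     (INF \<gamma>\<in>{\<gamma>. sg_markov_cs s T \<gamma>}. SUP u\<in>sg_controls (M s) (F s) s T.
        integral\<^sup>L (M s) (\<lambda>\<omega>. g (Xsol s x u \<gamma> T \<omega>)))"

definition sg_asym_super :: "real \<Rightarrow> (real ^ 'd::finite \<Rightarrow> real) \<Rightarrow> (real \<Rightarrow> 'w measure) \<Rightarrow> (real \<Rightarrow> real \<Rightarrow> 'w measure)
    \<Rightarrow> (real \<Rightarrow> real ^ 'd \<Rightarrow> (real \<Rightarrow> 'w \<Rightarrow> 'u::topological_space) \<Rightarrow> (real \<Rightarrow> (real \<Rightarrow> real ^ 'd) \<Rightarrow> 'u \<Rightarrow> 'v::topological_space)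
        \<Rightarrow> real \<Rightarrow> 'w \<Rightarrow> real ^ 'd)
    \<Rightarrow> (real \<Rightarrow> real ^ 'd \<Rightarrow> real) \<Rightarrow> bool" where
  "sg_asym_super T g M F Xsol w \<longleftrightarrow>
     bounded ((\<lambda>(t, x). w t x) ` ({0..T} \<times> UNIV)) \<and>
     continuous_on ({0..T} \<times> UNIV) (\<lambda>(t, x). w t x) \<and>
     (\<forall>x. w T x \<ge> g x) \<and>
     (\<exists>\<phi> :: real \<Rightarrow> real. (\<forall>e>0. \<phi> e > 0) \<and> (\<phi> \<longlongrightarrow> 0) (at_right 0) \<and>
       (\<forall>s\<in>{0..T}. \<forall>r\<in>{s..T}. \<exists>\<eta> :: real ^ 'd \<Rightarrow> 'u \<Rightarrow> 'v.
          (\<lambda>(x, u). \<eta> x u) \<in> measurable (borel \<Otimes>\<^sub>M borel) borel \<and>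
          (\<forall>x \<gamma> u t. sg_elem_cs s T \<gamma> \<and> u \<in> sg_controls (M s) (F s) s T \<and> t \<in> {r..T} \<longrightarrow>
             (AE \<omega> in M s. w r (Xsol s x u \<gamma> r \<omega>) \<ge>
                real_cond_exp (M s) (F s r) (\<lambda>\<omega>'. w t (Xsol s x u (sg_splice r \<eta> \<gamma>) t \<omega>')) \<omega>
                - (t - r) * \<phi> (t - r)))))"

end

theory Submission
  imports Defs
begin

text \<open>Fix \<open>s\<close>, \<open>x\<close> and a uniform grid \<open>s = t\<^sub>0 < \<dots> < t\<^sub>n = T\<close> of mesh \<open>h\<close>. Splicing the
  feedback maps \<open>\<eta>\<close> furnished by the super-solution property at \<open>t\<^sub>0, \<dots>, t\<^sub>n\<^sub>-\<^sub>1\<close> one after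
  the other yields a simple Markov counter-strategy \<open>\<gamma>\<close>. Along \<open>\<gamma>\<close>, whatever control \<open>u\<close> is
  played, \<open>w(t\<^sub>k, X\<^sub>t\<^sub>k)\<close> is a supermartingale up to a loss of \<open>h \<phi>(h)\<close> per step, so
  \<open>E g(X\<^sub>T) \<le> E w(T, X\<^sub>T) \<le> w(s, x) + (T - s) \<phi>(h)\<close>. Hence \<open>v\<^sup>+\<^sub>M(s, x) \<le> w(s, x) + (T - s) \<phi>(h)\<close>,
  and \<open>h \<rightarrow> 0\<close> gives the claim.\<close>

lemma space_sg_Bt: "space (sg_Bt s T t) = sg_paths s T"
  unfolding sg_Bt_def by (simp add: space_measure_of_conv)

lemma sg_Bt_evaluation_set:
  fixes A :: "(real ^ 'd::finite) set"
  assumes "q \<in> {s..t}" "A \<in> sets borel"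
  shows "{y \<in> sg_paths s T. y q \<in> A} \<in> sets (sg_Bt s T t :: (real \<Rightarrow> real ^ 'd) measure)"
proof -
  have gen: "{{y \<in> sg_paths s T. y q \<in> A} | q A. q \<in> {s..t} \<and> A \<in> sets (borel :: (real ^ 'd) measure)}
      \<subseteq> Pow (sg_paths s T)"
    by auto
  show ?thesis
    unfolding sg_Bt_def sets_measure_of[OF gen] by (rule sigma_sets.Basic) (use assms in blast)
qed

lemma sg_stopping_rule_const:
  assumes "c \<in> {s..T}"
  shows "sg_stopping_rule s T (\<lambda>y::real \<Rightarrow> real ^ 'd::finite. c)"
proof -
  have "{y \<in> sg_paths s T. c \<le> t} \<in> sets (sg_Bt s T t :: (real \<Rightarrow> real ^ 'd) measure)" for t
    using sets.top[of "sg_Bt s T t :: (real \<Rightarrow> real ^ 'd) measure"]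
    by (cases "c \<le> t") (simp_all add: space_sg_Bt)
  then show ?thesis
    unfolding sg_stopping_rule_def using assms by blast
qed

lemma measurable_evaluation_sg_Bstop_const:
  assumes "s \<le> q" "q \<le> c" "c \<le> T"
  shows "(\<lambda>y. y q) \<in> borel_measurable (sg_Bstop s T (\<lambda>y::real \<Rightarrow> real ^ 'd::finite. c))"
proof (rule borel_measurableI)
  fix S :: "(real ^ 'd) set"
  assume "open S"
  let ?A = "{y \<in> sg_paths s T. y q \<in> S}"
  let ?G = "{A \<in> sets (sg_Bt s T T). \<forall>t\<in>{s..T}. A \<inter> {y \<in> sg_paths s T. c \<le> t} \<in> sets (sg_Bt s T t)}
     :: (real \<Rightarrow> real ^ 'd) set set"
  have G_sub: "?G \<subseteq> Pow (sg_paths s T)"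
    using sets.sets_into_space[of _ "sg_Bt s T T"] by (auto simp: space_sg_Bt)
  have A: "?A \<in> sets (sg_Bt s T t :: (real \<Rightarrow> real ^ 'd) measure)" if "c \<le> t" for t
    by (rule sg_Bt_evaluation_set) (use assms \<open>open S\<close> that in auto)
  have "?A \<inter> {y \<in> sg_paths s T. c \<le> t} \<in> sets (sg_Bt s T t :: (real \<Rightarrow> real ^ 'd) measure)" for t
  proof (cases "c \<le> t")
    case True
    have "?A \<inter> {y \<in> sg_paths s T. c \<le> t} = ?A" using True by blast
    with A[OF True] show ?thesis by simp
  qed simp
  with A[of T] assms have "?A \<in> ?G" by blast
  have space: "space (sg_Bstop s T (\<lambda>y::real \<Rightarrow> real ^ 'd. c)) = sg_paths s T"
    unfolding sg_Bstop_def by (simp add: space_measure_of_conv)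
  have preimage: "(\<lambda>y. y q) -` S \<inter> sg_paths s T = ?A" by blast
  show "(\<lambda>y. y q) -` S \<inter> space (sg_Bstop s T (\<lambda>y::real \<Rightarrow> real ^ 'd. c))
      \<in> sets (sg_Bstop s T (\<lambda>y::real \<Rightarrow> real ^ 'd. c))"
    unfolding space preimage unfolding sg_Bstop_def sets_measure_of[OF G_sub]
    by (rule sigma_sets.Basic) fact
qed

lemma measurable_feedback_sg_Bstop_const:
  fixes \<eta> :: "real ^ 'd::finite \<Rightarrow> 'u::topological_space \<Rightarrow> 'v::topological_space"
  assumes "s \<le> q" "q \<le> c" "c \<le> T"
    and \<eta>: "(\<lambda>(x, u). \<eta> x u) \<in> measurable (borel \<Otimes>\<^sub>M borel) borel"
  shows "(\<lambda>(y, u). \<eta> (y q) u) \<in> measurable (sg_Bstop s T (\<lambda>y::real \<Rightarrow> real ^ 'd. c) \<Otimes>\<^sub>M borel) borel"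
proof -
  have "(\<lambda>p. (fst p q, snd p))
      \<in> measurable (sg_Bstop s T (\<lambda>y::real \<Rightarrow> real ^ 'd. c) \<Otimes>\<^sub>M (borel :: 'u measure)) (borel \<Otimes>\<^sub>M borel)"
    using measurable_evaluation_sg_Bstop_const[OF assms(1-3)] by measurable
  from measurable_comp[OF this \<eta>] show ?thesis
    by (simp add: comp_def case_prod_beta)
qed

lemma sg_elem_csI_deterministic_grid:
  fixes \<gamma> :: "real \<Rightarrow> (real \<Rightarrow> real ^ 'd::finite) \<Rightarrow> 'u::topological_space \<Rightarrow> 'v::topological_space"
  assumes "c 0 = s" "c N = T"
    and "\<And>k. k < N \<Longrightarrow> c k \<le> c (Suc k)"
    and "\<And>k. k \<le> N \<Longrightarrow> c k \<in> {s..T}"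
    and "\<And>k. k \<in> {1..N} \<Longrightarrow>
      (\<lambda>(y, u). f k y u) \<in> measurable (sg_Bstop s T (\<lambda>y::real \<Rightarrow> real ^ 'd. c (k - 1)) \<Otimes>\<^sub>M borel) borel"
    and "\<And>k y t u. k \<in> {1..N} \<Longrightarrow> c (k - 1) < t \<Longrightarrow> t \<le> c k \<Longrightarrow> \<gamma> t y u = f k y u"
  shows "sg_elem_cs s T \<gamma>"
  unfolding sg_elem_cs_def
  by (rule exI[of _ N], rule exI[of _ "\<lambda>k (y::real \<Rightarrow> real ^ 'd). c k"], rule exI[of _ f])
     (use assms sg_stopping_rule_const in blast)

text \<open>\<open>sg_splice_iter t \<eta> k\<close> is \<open>\<gamma>[t\<^sub>0, \<eta>\<^sub>0][t\<^sub>1, \<eta>\<^sub>1]\<dots>[t\<^sub>k\<^sub>-\<^sub>1, \<eta>\<^sub>k\<^sub>-\<^sub>1]\<close>; the initial strategy is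
  irrelevant on \<open>(t\<^sub>0, T]\<close> once \<open>k > 0\<close>.\<close>

primrec sg_splice_iter :: "(nat \<Rightarrow> real) \<Rightarrow> (nat \<Rightarrow> real ^ 'd::finite \<Rightarrow> 'u \<Rightarrow> 'v) \<Rightarrow> nat
    \<Rightarrow> real \<Rightarrow> (real \<Rightarrow> real ^ 'd) \<Rightarrow> 'u \<Rightarrow> 'v" where
  "sg_splice_iter t \<eta> 0 = (\<lambda>_ _ _. undefined)"
| "sg_splice_iter t \<eta> (Suc k) = sg_splice (t k) (\<eta> k) (sg_splice_iter t \<eta> k)"

lemma sg_splice_iter_eq:
  assumes "strict_mono t" "i < k" "t i < \<tau>" "\<tau> \<le> t (Suc i) \<or> i = k - 1"
  shows "sg_splice_iter t \<eta> k \<tau> y u = \<eta> i (y (t i)) u"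
  using assms(2-)
proof (induction k)
  case (Suc k)
  show ?case
  proof (cases "i = k")
    case False
    with Suc.prems have "i < k" "\<tau> \<le> t (Suc i)" by auto
    moreover have "t (Suc i) \<le> t k"
      using \<open>i < k\<close> strict_mono_leD[OF assms(1)] by simp
    ultimately show ?thesis
      using Suc by (simp add: sg_splice_def)
  qed (use Suc.prems in \<open>simp add: sg_splice_def\<close>)
qed simp

lemma sg_elem_cs_splice_iter:
  fixes \<eta> :: "nat \<Rightarrow> real ^ 'd::finite \<Rightarrow> 'u::topological_space \<Rightarrow> 'v::topological_space"
  assumes t: "strict_mono t" "t 0 = s" "t n = T"
    and \<eta>: "\<And>i. i < n \<Longrightarrow> (\<lambda>(x, u). \<eta> i x u) \<in> measurable (borel \<Otimes>\<^sub>M borel) borel"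
  shows "sg_elem_cs s T (sg_splice_iter t \<eta> k)"
proof (rule sg_elem_csI_deterministic_grid[where c = t and N = n and f = "\<lambda>j. sg_splice_iter t \<eta> k (t j)"])
  have t_le: "i \<le> j \<Longrightarrow> t i \<le> t j" for i j
    using strict_mono_leD[OF t(1)] .
  show "t 0 = s" "t n = T" "\<And>i. i < n \<Longrightarrow> t i \<le> t (Suc i)" "\<And>i. i \<le> n \<Longrightarrow> t i \<in> {s..T}"
    using t t_le by auto
  \<comment> \<open>On \<open>(t\<^sub>j\<^sub>-\<^sub>1, t\<^sub>j]\<close> the strategy uses the last feedback map spliced in before \<open>t\<^sub>j\<close>.\<close>
  have val: "sg_splice_iter t \<eta> k \<tau> y u = \<eta> (min (j - 1) (k - 1)) (y (t (min (j - 1) (k - 1)))) u"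
    if "k \<noteq> 0" "j \<in> {1..n}" "t (j - 1) < \<tau>" "\<tau> \<le> t j" for \<tau> y u j
  proof (rule sg_splice_iter_eq[OF t(1)])
    show "min (j - 1) (k - 1) < k" using that by simp
    show "t (min (j - 1) (k - 1)) < \<tau>" using that t_le[of "min (j - 1) (k - 1)" "j - 1"] by simp
    show "\<tau> \<le> t (Suc (min (j - 1) (k - 1))) \<or> min (j - 1) (k - 1) = k - 1"
      using that by (auto simp: min_def)
  qed
  fix j assume j: "j \<in> {1..n}"
  then have tj: "t (j - 1) < t j"
    using strict_monoD[OF t(1)] by simp
  show "(\<lambda>(y, u). sg_splice_iter t \<eta> k (t j) y u)
      \<in> measurable (sg_Bstop s T (\<lambda>y::real \<Rightarrow> real ^ 'd. t (j - 1)) \<Otimes>\<^sub>M borel) borel"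
  proof (cases "k = 0")
    case False
    let ?i = "min (j - 1) (k - 1)"
    have "(\<lambda>(y, u). \<eta> ?i (y (t ?i)) u)
        \<in> measurable (sg_Bstop s T (\<lambda>y::real \<Rightarrow> real ^ 'd. t (j - 1)) \<Otimes>\<^sub>M borel) borel"
      using j t t_le[of 0 ?i] t_le[of ?i "j - 1"] t_le[of "j - 1" n]
      by (intro measurable_feedback_sg_Bstop_const \<eta>) (auto simp: min_less_iff_disj)
    moreover have "(\<lambda>(y, u). sg_splice_iter t \<eta> k (t j) y u) = (\<lambda>(y, u). \<eta> ?i (y (t ?i)) u)"
      using val[OF False j tj order.refl] by auto
    ultimately show ?thesis by simp
  qed simp
  fix y \<tau> u assume \<tau>: "t (j - 1) < \<tau>" "\<tau> \<le> t j"
  show "sg_splice_iter t \<eta> k \<tau> y u = sg_splice_iter t \<eta> k (t j) y u"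
  proof (cases "k = 0")
    case False
    show ?thesis
      unfolding val[OF False j \<tau>] val[OF False j tj order.refl] ..
  qed simp
qed

lemma sg_markov_cs_splice_iter:
  fixes \<eta> :: "nat \<Rightarrow> real ^ 'd::finite \<Rightarrow> 'u::topological_space \<Rightarrow> 'v::topological_space"
  assumes t: "strict_mono t" "t 0 = s" "t n = T"
    and \<eta>: "\<And>i. i < n \<Longrightarrow> (\<lambda>(x, u). \<eta> i x u) \<in> measurable (borel \<Otimes>\<^sub>M borel) borel"
  shows "sg_markov_cs s T (sg_splice_iter t \<eta> n)"
  unfolding sg_markov_cs_def
proof (intro exI[of _ "map t [0..<Suc n]"] exI[of _ "\<lambda>k. if k < n then \<eta> k else (\<lambda>_ _. undefined)"] conjI)
  let ?ts = "map t [0..<Suc n]"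
  let ?\<eta> = "\<lambda>k. if k < n then \<eta> k else (\<lambda>_ _. undefined)"
  show "?ts \<noteq> []" "?ts ! 0 = s" "last ?ts = T"
    using t by (simp_all del: upt_Suc add: last_map)
  show "sorted_wrt (<) ?ts"
    unfolding sorted_wrt_map
    by (rule sorted_wrt_mono_rel[OF _ sorted_wrt_upt]) (use t(1) strict_monoD in auto)
  show "\<forall>k. (\<lambda>(x, u). ?\<eta> k x u) \<in> measurable (borel \<Otimes>\<^sub>M borel) borel"
    using \<eta> by simp
  show "\<forall>k < length ?ts - 1. \<forall>\<tau> y u. ?ts ! k < \<tau> \<and> \<tau> \<le> ?ts ! (k + 1) \<longrightarrow>
      sg_splice_iter t \<eta> n \<tau> y u = ?\<eta> k (y (?ts ! k)) u"
  proof (intro allI impI)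
    fix k \<tau> y u
    assume "k < length ?ts - 1" and \<tau>: "?ts ! k < \<tau> \<and> \<tau> \<le> ?ts ! (k + 1)"
    then have "k < n" by simp
    then have ts_nth: "?ts ! k = t k" "?ts ! Suc k = t (Suc k)"
      by (simp_all del: upt_Suc)
    have "sg_splice_iter t \<eta> n \<tau> y u = \<eta> k (y (t k)) u"
      by (rule sg_splice_iter_eq[OF t(1) \<open>k < n\<close>]) (use \<tau> in \<open>simp_all add: ts_nth del: upt_Suc\<close>)
    then show "sg_splice_iter t \<eta> n \<tau> y u = ?\<eta> k (y (?ts ! k)) u"
      unfolding ts_nth(1) using \<open>k < n\<close> by simp
  qed
qed

lemma (in prob_space) abs_integral_le_const:
  fixes f :: "'a \<Rightarrow> real"
  assumes "\<And>\<omega>. \<omega> \<in> space M \<Longrightarrow> \<bar>f \<omega>\<bar> \<le> B"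
  shows "\<bar>integral\<^sup>L M f\<bar> \<le> B"
proof (cases "integrable M f")
  case True
  have "\<bar>integral\<^sup>L M f\<bar> \<le> (\<integral>\<omega>. \<bar>f \<omega>\<bar> \<partial>M)"
    using integral_norm_bound[of M f] by simp
  also have "\<dots> \<le> (\<integral>\<omega>. B \<partial>M)"
    by (rule integral_mono) (use True assms in auto)
  finally show ?thesis by (simp add: prob_space)
next
  case False
  obtain \<omega> where "\<omega> \<in> space M" using not_empty by blast
  with assms have "0 \<le> B" by force
  with False show ?thesis by (simp add: not_integrable_integral_eq)
qed

lemma (in prob_space) integrable_bounded_continuous_comp:
  fixes f :: "'b::topological_space \<Rightarrow> real"
  assumes "subalgebra M F" "X \<in> borel_measurable F" "continuous_on UNIV f" "\<And>z. \<bar>f z\<bar> \<le> B"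
  shows "integrable M (\<lambda>\<omega>. f (X \<omega>))"
proof (rule integrable_const_bound[where B = B])
  show "(\<lambda>\<omega>. f (X \<omega>)) \<in> borel_measurable M"
    using borel_measurable_continuous_on[OF assms(3) measurable_from_subalg[OF assms(1,2)]] .
qed (use assms(4) in auto)

lemma (in prob_space) integral_le_of_cond_exp_drift:
  fixes Y :: "nat \<Rightarrow> 'a \<Rightarrow> real"
  assumes "\<And>k. k < n \<Longrightarrow> subalgebra M (G k)"
    and "\<And>k. k \<le> n \<Longrightarrow> integrable M (Y k)"
    and "\<And>k. k < n \<Longrightarrow> AE \<omega> in M. real_cond_exp M (G k) (Y (Suc k)) \<omega> - c \<le> Y k \<omega>"
  shows "integral\<^sup>L M (Y n) \<le> integral\<^sup>L M (Y 0) + real n * c"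
  using assms
proof (induction n)
  case (Suc n)
  interpret finite_measure_subalgebra M "G n"
    using Suc.prems(1) by unfold_locales auto
  have ce: "integrable M (real_cond_exp M (G n) (Y (Suc n)))"
      "integral\<^sup>L M (real_cond_exp M (G n) (Y (Suc n))) = integral\<^sup>L M (Y (Suc n))"
    using real_cond_exp_int[OF Suc.prems(2)] by auto
  have "integral\<^sup>L M (Y (Suc n)) - c = (\<integral>\<omega>. real_cond_exp M (G n) (Y (Suc n)) \<omega> - c \<partial>M)"
    using ce by (simp add: prob_space)
  also have "\<dots> \<le> integral\<^sup>L M (Y n)"
    by (rule integral_mono_AE) (use ce Suc.prems in auto)
  also have "\<dots> \<le> integral\<^sup>L M (Y 0) + real n * c"
    by (rule Suc.IH) (use Suc.prems in auto)
  finally show ?case by (simp add: algebra_simps)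
qed simp

lemma INF_SUP_le_of_bounded:
  fixes f :: "'a \<Rightarrow> 'b \<Rightarrow> real"
  assumes "A \<noteq> {}" "\<And>\<gamma> u. \<bar>f \<gamma> u\<bar> \<le> B" "\<gamma> \<in> \<Gamma>" "\<And>u. u \<in> A \<Longrightarrow> f \<gamma> u \<le> c"
  shows "(INF \<gamma>\<in>\<Gamma>. SUP u\<in>A. f \<gamma> u) \<le> c"
proof -
  have bdd_above: "bdd_above (f \<gamma>' ` A)" for \<gamma>'
    using assms(2) abs_le_D1 by (intro bdd_aboveI2) blast
  obtain u0 where "u0 \<in> A" using assms(1) by blast
  have "- B \<le> (SUP u\<in>A. f \<gamma>' u)" for \<gamma>'
    using assms(2)[of \<gamma>' u0] cSUP_upper[OF \<open>u0 \<in> A\<close> bdd_above, of \<gamma>'] by linarith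
  then have "(INF \<gamma>\<in>\<Gamma>. SUP u\<in>A. f \<gamma> u) \<le> (SUP u\<in>A. f \<gamma> u)"
    by (intro cINF_lower[OF bdd_belowI2 assms(3)])
  also have "\<dots> \<le> c"
    by (rule cSUP_least[OF assms(1,4)])
  finally show ?thesis .
qed

lemma le_of_le_plus_vanishing:
  fixes v w c :: real and \<phi> :: "real \<Rightarrow> real"
  assumes \<phi>: "(\<phi> \<longlongrightarrow> 0) (at_right 0)" and "0 < c"
    and le: "\<And>n. 0 < n \<Longrightarrow> v \<le> w + c * \<phi> (c / real n)"
  shows "v \<le> w"
proof -
  have "filterlim (\<lambda>n. c / real n) (at_right 0) sequentially"
    using \<open>0 < c\<close>
    by (intro tendsto_imp_filterlim_at_right[OF lim_const_over_n]) (auto intro: eventually_sequentiallyI[of 1])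
  then have "(\<lambda>n. w + c * \<phi> (c / real n)) \<longlonglongrightarrow> w + c * 0"
    by (intro tendsto_intros filterlim_compose[OF \<phi>])
  then show ?thesis
    by (intro LIMSEQ_le_const[where a = v]) (use le in \<open>auto intro: exI[of _ 1]\<close>)
qed

lemma continuous_on_slice:
  assumes "continuous_on (A \<times> UNIV) (\<lambda>(t, x). f t x)" "t \<in> A"
  shows "continuous_on UNIV (f t)"
  using continuous_on_compose[OF continuous_on_Pair[OF continuous_on_const continuous_on_id]
      continuous_on_subset[OF assms(1)]] assms(2)
  by (auto simp: o_def)

lemma (in prob_space) integral_terminal_payoff_le_of_drift:
  fixes X :: "nat \<Rightarrow> real \<Rightarrow> 'a \<Rightarrow> 'b::topological_space" and w :: "real \<Rightarrow> 'b \<Rightarrow> real"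
  assumes F: "\<And>r. r \<in> {s..T} \<Longrightarrow> subalgebra M (F r)"
    and X_adapted: "\<And>k r. r \<in> {s..T} \<Longrightarrow> X k r \<in> borel_measurable (F r)"
    and X_init: "\<And>k \<omega>. \<omega> \<in> space M \<Longrightarrow> X k s \<omega> = x"
    and t: "\<And>k. k \<le> n \<Longrightarrow> t k \<in> {s..T}" "t 0 = s" "t n = T"
    and w_bdd: "\<And>r z. r \<in> {s..T} \<Longrightarrow> \<bar>w r z\<bar> \<le> Bw"
    and w_cont: "\<And>r. r \<in> {s..T} \<Longrightarrow> continuous_on UNIV (w r)"
    and g: "\<And>z. g z \<le> w T z" "\<And>z. \<bar>g z\<bar> \<le> Bg" "continuous_on UNIV g"
    and drift: "\<And>k. k < n \<Longrightarrow> AE \<omega> in M.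
      real_cond_exp M (F (t k)) (\<lambda>\<omega>. w (t (Suc k)) (X (Suc k) (t (Suc k)) \<omega>)) \<omega> - c \<le> w (t k) (X k (t k) \<omega>)"
  shows "(\<integral>\<omega>. g (X n T \<omega>) \<partial>M) \<le> w s x + real n * c"
proof -
  define Y where "Y k \<omega> = w (t k) (X k (t k) \<omega>)" for k \<omega>
  have "T \<in> {s..T}" using t by fastforce
  have Y_int: "integrable M (Y k)" if "k \<le> n" for k
    unfolding Y_def
    using t(1)[OF that]
    by (intro integrable_bounded_continuous_comp[OF F X_adapted w_cont w_bdd])
  have "(\<integral>\<omega>. g (X n T \<omega>) \<partial>M) \<le> integral\<^sup>L M (Y n)"
  proof (rule integral_mono)
    show "integrable M (\<lambda>\<omega>. g (X n T \<omega>))"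
      by (rule integrable_bounded_continuous_comp[OF F X_adapted g(3,2)]) (fact \<open>T \<in> {s..T}\<close>)+
  qed (use Y_int[of n] g(1) in \<open>simp_all add: Y_def t(3)\<close>)
  also have "\<dots> \<le> integral\<^sup>L M (Y 0) + real n * c"
    using t(1) by (intro integral_le_of_cond_exp_drift[where G = "\<lambda>k. F (t k)"] Y_int F)
      (auto simp: Y_def drift)
  also have "integral\<^sup>L M (Y 0) = w s x"
    by (simp add: Y_def t(2) X_init prob_space cong: Bochner_Integration.integral_cong)
  finally show ?thesis .
qed

lemma sg_vM_le_uniform_grid:
  fixes w :: "real \<Rightarrow> real ^ 'd::finite \<Rightarrow> real"
    and Xsol :: "real \<Rightarrow> real ^ 'd \<Rightarrow> (real \<Rightarrow> 'w \<Rightarrow> 'u::topological_space)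
      \<Rightarrow> (real \<Rightarrow> (real \<Rightarrow> real ^ 'd) \<Rightarrow> 'u \<Rightarrow> 'v::topological_space) \<Rightarrow> real \<Rightarrow> 'w \<Rightarrow> real ^ 'd"
  assumes filt: "sg_filt_usual (M s) (F s) s T"
    and sol: "\<And>u \<gamma>. u \<in> sg_controls (M s) (F s) s T \<Longrightarrow> sg_elem_cs s T \<gamma> \<Longrightarrow>
      sg_strong_sol (M s) (F s) (W s) b \<sigma> s T x u \<gamma> (Xsol s x u \<gamma>)"
    and w_bdd: "\<And>r z. r \<in> {s..T} \<Longrightarrow> \<bar>w r z\<bar> \<le> Bw"
    and w_cont: "\<And>r. r \<in> {s..T} \<Longrightarrow> continuous_on UNIV (w r)"
    and g: "\<And>z. g z \<le> w T z" "\<And>z. \<bar>g z\<bar> \<le> Bg" "continuous_on UNIV g"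
    and step: "\<forall>r\<in>{s..T}. \<exists>\<eta> :: real ^ 'd \<Rightarrow> 'u \<Rightarrow> 'v.
      (\<lambda>(x, u). \<eta> x u) \<in> measurable (borel \<Otimes>\<^sub>M borel) borel \<and>
      (\<forall>x \<gamma> u t. sg_elem_cs s T \<gamma> \<and> u \<in> sg_controls (M s) (F s) s T \<and> t \<in> {r..T} \<longrightarrow>
         (AE \<omega> in M s. w r (Xsol s x u \<gamma> r \<omega>) \<ge>
            real_cond_exp (M s) (F s r) (\<lambda>\<omega>'. w t (Xsol s x u (sg_splice r \<eta> \<gamma>) t \<omega>')) \<omega>
            - (t - r) * \<phi> (t - r)))"
    and h: "0 < h" "s + real n * h = T"
  shows "sg_vM T g M F Xsol s x \<le> w s x + (T - s) * \<phi> h"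
proof -
  interpret prob_space "M s"
    using filt by (simp add: sg_filt_usual_def)
  have F: "\<And>r. r \<in> {s..T} \<Longrightarrow> subalgebra (M s) (F s r)"
    using filt by (simp add: sg_filt_usual_def)
  obtain \<eta> where \<eta>: "\<forall>r\<in>{s..T}. (\<lambda>(x, u). \<eta> r x u) \<in> measurable (borel \<Otimes>\<^sub>M borel) borel \<and>
      (\<forall>x \<gamma> u t. sg_elem_cs s T \<gamma> \<and> u \<in> sg_controls (M s) (F s) s T \<and> t \<in> {r..T} \<longrightarrow>
         (AE \<omega> in M s. w r (Xsol s x u \<gamma> r \<omega>) \<ge>
            real_cond_exp (M s) (F s r) (\<lambda>\<omega>'. w t (Xsol s x u (sg_splice r (\<eta> r) \<gamma>) t \<omega>')) \<omega>
            - (t - r) * \<phi> (t - r)))"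
    using bchoice[OF step] by blast
  define t where "t k = s + real k * h" for k
  define \<gamma> where "\<gamma> = sg_splice_iter t (\<lambda>k. \<eta> (t k))"
  have t: "strict_mono t" "t 0 = s" "t n = T" "\<And>k. k \<le> n \<Longrightarrow> t k \<in> {s..T}"
    using h by (auto simp: t_def strict_mono_def intro!: mult_right_mono)
  have \<eta>_meas: "\<And>k. k < n \<Longrightarrow> (\<lambda>(x, u). \<eta> (t k) x u) \<in> measurable (borel \<Otimes>\<^sub>M borel) borel"
    using \<eta> t(4) by simp
  have elem: "sg_elem_cs s T (\<gamma> k)" for k
    unfolding \<gamma>_def using t(1-3) \<eta>_meas by (rule sg_elem_cs_splice_iter)
  let ?C = "sg_controls (M s) (F s) s T :: (real \<Rightarrow> 'w \<Rightarrow> 'u) set"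
  show ?thesis
    unfolding sg_vM_def
  proof (rule INF_SUP_le_of_bounded)
    have "(\<lambda>_ _. undefined) \<in> ?C"
      by (simp add: sg_controls_def split_def)
    then show "?C \<noteq> {}" by blast
    show "\<bar>\<integral>\<omega>. g (Xsol s x u \<gamma>' T \<omega>) \<partial>M s\<bar> \<le> Bg" for u \<gamma>'
      by (rule abs_integral_le_const) (rule g(2))
    show "\<gamma> n \<in> {\<gamma>. sg_markov_cs s T \<gamma>}"
      unfolding \<gamma>_def using t(1-3) \<eta>_meas by (simp add: sg_markov_cs_splice_iter)
    fix u assume u: "u \<in> ?C"
    have "(\<integral>\<omega>. g (Xsol s x u (\<gamma> n) T \<omega>) \<partial>M s) \<le> w s x + real n * (h * \<phi> h)"
    proof (rule integral_terminal_payoff_le_of_drift[where X = "\<lambda>k. Xsol s x u (\<gamma> k)" and F = "F s" and T = T and w = w,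
          OF F _ _ t(4,2,3) w_bdd w_cont g])
      show "Xsol s x u (\<gamma> k) r \<in> borel_measurable (F s r)" if "r \<in> {s..T}" for k r
        using sol[OF u elem] that by (simp add: sg_strong_sol_def)
      show "Xsol s x u (\<gamma> k) s \<omega> = x" if "\<omega> \<in> space (M s)" for k \<omega>
        using sol[OF u elem] that by (simp add: sg_strong_sol_def)
      fix k assume "k < n"
      then have "t (Suc k) \<in> {t k..T}" "t (Suc k) - t k = h"
        using t(4)[of "Suc k"] h(1) by (auto simp: t_def algebra_simps)
      with \<eta> t(4)[of k] \<open>k < n\<close> elem u
      show "AE \<omega> in M s. real_cond_exp (M s) (F s (t k))
          (\<lambda>\<omega>. w (t (Suc k)) (Xsol s x u (\<gamma> (Suc k)) (t (Suc k)) \<omega>)) \<omega> - h * \<phi> h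
        \<le> w (t k) (Xsol s x u (\<gamma> k) (t k) \<omega>)"
        unfolding \<gamma>_def by fastforce
    qed
    also have "\<dots> = w s x + (T - s) * \<phi> h"
      using h(2) by (simp add: mult.assoc[symmetric])
    finally show "(\<integral>\<omega>. g (Xsol s x u (\<gamma> n) T \<omega>) \<partial>M s) \<le> w s x + (T - s) * \<phi> h" .
  qed
qed

lemma sg_asym_super_grid_bound:
  fixes w :: "real \<Rightarrow> real ^ 'd::finite \<Rightarrow> real"
    and Xsol :: "real \<Rightarrow> real ^ 'd \<Rightarrow> (real \<Rightarrow> 'w \<Rightarrow> 'u::topological_space)
      \<Rightarrow> (real \<Rightarrow> (real \<Rightarrow> real ^ 'd) \<Rightarrow> 'u \<Rightarrow> 'v::topological_space) \<Rightarrow> real \<Rightarrow> 'w \<Rightarrow> real ^ 'd"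
  assumes super: "sg_asym_super T g M F Xsol w"
    and s: "s \<in> {0..T}" and filt: "sg_filt_usual (M s) (F s) s T"
    and sol: "\<And>u \<gamma>. u \<in> sg_controls (M s) (F s) s T \<Longrightarrow> sg_elem_cs s T \<gamma> \<Longrightarrow>
      sg_strong_sol (M s) (F s) (W s) b \<sigma> s T x u \<gamma> (Xsol s x u \<gamma>)"
    and g_cont: "continuous_on UNIV g" and g_bdd: "bounded (range g)"
  obtains \<phi> where "(\<phi> \<longlongrightarrow> 0) (at_right 0)"
    and "\<And>h n. 0 < h \<Longrightarrow> s + real n * h = T \<Longrightarrow> sg_vM T g M F Xsol s x \<le> w s x + (T - s) * \<phi> h"
proof -
  obtain \<phi> where w_bdd: "bounded ((\<lambda>(t, x). w t x) ` ({0..T} \<times> UNIV))"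
    and w_cont: "continuous_on ({0..T} \<times> UNIV) (\<lambda>(t, x). w t x)"
    and g_le_w: "\<forall>x. g x \<le> w T x" and \<phi>: "(\<phi> \<longlongrightarrow> 0) (at_right 0)"
    and step: "\<forall>s\<in>{0..T}. \<forall>r\<in>{s..T}. \<exists>\<eta> :: real ^ 'd \<Rightarrow> 'u \<Rightarrow> 'v.
      (\<lambda>(x, u). \<eta> x u) \<in> measurable (borel \<Otimes>\<^sub>M borel) borel \<and>
      (\<forall>x \<gamma> u t. sg_elem_cs s T \<gamma> \<and> u \<in> sg_controls (M s) (F s) s T \<and> t \<in> {r..T} \<longrightarrow>
         (AE \<omega> in M s. w r (Xsol s x u \<gamma> r \<omega>) \<ge>
            real_cond_exp (M s) (F s r) (\<lambda>\<omega>'. w t (Xsol s x u (sg_splice r \<eta> \<gamma>) t \<omega>')) \<omega>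
            - (t - r) * \<phi> (t - r)))"
    using super unfolding sg_asym_super_def by (elim conjE exE) (rule that; assumption)
  obtain Bw where Bw: "\<And>t z. t \<in> {0..T} \<Longrightarrow> \<bar>w t z\<bar> \<le> Bw"
    using w_bdd unfolding bounded_iff by fastforce
  obtain Bg where Bg: "\<And>z. \<bar>g z\<bar> \<le> Bg"
    using g_bdd unfolding bounded_iff by fastforce
  have "sg_vM T g M F Xsol s x \<le> w s x + (T - s) * \<phi> h"
    if "0 < h" "s + real n * h = T" for h n
  proof (rule sg_vM_le_uniform_grid[where W = W and b = b and \<sigma> = \<sigma> and \<phi> = \<phi> and n = n])
    show "\<And>r z. r \<in> {s..T} \<Longrightarrow> \<bar>w r z\<bar> \<le> Bw" using Bw s by simp
    show "\<And>r. r \<in> {s..T} \<Longrightarrow> continuous_on UNIV (w r)"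
      using continuous_on_slice[OF w_cont] s by simp
  qed (use filt sol g_le_w Bg g_cont bspec[OF step s] that in simp_all)
  with \<phi> show ?thesis by (rule that)
qed

theorem proposition3p3:
  fixes T :: real
    and b :: "real \<Rightarrow> real ^ 'd::finite \<Rightarrow> 'u::metric_space \<Rightarrow> 'v::metric_space \<Rightarrow> real ^ 'd"
    and \<sigma> :: "real \<Rightarrow> real ^ 'd \<Rightarrow> 'u \<Rightarrow> 'v \<Rightarrow> real ^ 'm::finite ^ 'd"
    and g :: "real ^ 'd \<Rightarrow> real"
    and M :: "real \<Rightarrow> 'w measure"
    and F :: "real \<Rightarrow> real \<Rightarrow> 'w measure"
    and W :: "real \<Rightarrow> real \<Rightarrow> 'w \<Rightarrow> real ^ 'm"
    and Xsol :: "real \<Rightarrow> real ^ 'd \<Rightarrow> (real \<Rightarrow> 'w \<Rightarrow> 'u) \<Rightarrow> (real \<Rightarrow> (real \<Rightarrow> real ^ 'd) \<Rightarrow> 'u \<Rightarrow> 'v)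
                 \<Rightarrow> real \<Rightarrow> 'w \<Rightarrow> real ^ 'd"
    and w :: "real \<Rightarrow> real ^ 'd \<Rightarrow> real"
  assumes T_pos: "0 < T"
    and U_compact: "compact (UNIV :: 'u set)"
    and V_compact: "compact (UNIV :: 'v set)"
    and b_cont: "continuous_on ({0..T} \<times> UNIV \<times> UNIV \<times> UNIV) (\<lambda>(t, x, u, v). b t x u v)"
    and \<sigma>_cont: "continuous_on ({0..T} \<times> UNIV \<times> UNIV \<times> UNIV) (\<lambda>(t, x, u, v). \<sigma> t x u v)"
    and loc_lip: "\<forall>R. \<exists>L. \<forall>t\<in>{0..T}. \<forall>x y u v. norm x \<le> R \<and> norm y \<le> R \<longrightarrow>
                    norm (b t x u v - b t y u v) \<le> L * norm (x - y) \<and>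
                    norm (\<sigma> t x u v - \<sigma> t y u v) \<le> L * norm (x - y)"
    and lin_growth: "\<exists>C. \<forall>t\<in>{0..T}. \<forall>x u v. norm (b t x u v) + norm (\<sigma> t x u v) \<le> C * (1 + norm x)"
    and g_cont: "continuous_on UNIV g"
    and g_bdd: "bounded (range g)"
    and spaces: "\<forall>s\<in>{0..T}. sg_filt_usual (M s) (F s) s T \<and> sg_brownian (M s) (F s) s T (W s)"
    and solutions: "\<forall>s\<in>{0..T}. \<forall>x u \<gamma>. u \<in> sg_controls (M s) (F s) s T \<and> sg_elem_cs s T \<gamma> \<longrightarrow>
                      sg_strong_sol (M s) (F s) (W s) b \<sigma> s T x u \<gamma> (Xsol s x u \<gamma>)"
    and super: "sg_asym_super T g M F Xsol w"
  shows "\<forall>s\<in>{0..T}. \<forall>x. sg_vM T g M F Xsol s x \<le> w s x"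
proof (intro ballI allI)
  fix s x assume s: "s \<in> {0..T}"
  obtain \<phi> where \<phi>: "(\<phi> \<longlongrightarrow> 0) (at_right 0)"
    and grid: "\<And>h n. 0 < h \<Longrightarrow> s + real n * h = T \<Longrightarrow> sg_vM T g M F Xsol s x \<le> w s x + (T - s) * \<phi> h"
    using sg_asym_super_grid_bound[OF super s, where x = x and W = W and b = b and \<sigma> = \<sigma>]
      spaces solutions s g_cont g_bdd by blast
  show "sg_vM T g M F Xsol s x \<le> w s x"
  proof (cases "s = T")
    case True
    then show ?thesis using grid[of 1 0] by simp
  next
    case False
    with s have "0 < T - s" by simp
    moreover have "sg_vM T g M F Xsol s x \<le> w s x + (T - s) * \<phi> ((T - s) / real n)" if "0 < n" for n
      using \<open>0 < T - s\<close> that by (intro grid[where n = n]) simp_all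
    ultimately show ?thesis
      by (rule le_of_le_plus_vanishing[OF \<phi>])
  qed
qed

end
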